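(* For every $p\ge2$ (i.e. $m=2^p>2$), the Sylvester matrix $H(2^p)$ has nonzero permanent. Consequently, when $n=m=2^p>2$ identical bosons are injected one per mode into the Sylvester interferometer $\frac{1}{\sqrt m}H(m)$, the output state with one boson in each mode is not suppressed.
   Context: For $m=2^p$, the Sylvester matrix $H(m)$ is defined recursively by $H(1)=[1]$ and $H(2^p)=\begin{bmatrix}H(2^{p-1})&H(2^{p-1})\\ H(2^{p-1})&-H(2^{p-1})\end{bmatrix}$. $\mathrm{perm}\,A=\sum_{\sigma\in S_m}\prod_{i=1}^m a_{i,\sigma(i)}$. For input $\vec s$ and output $\vec t$ (nondecreasing tuples of mode indices), the scattering matrix is $S_{i,j}=U_{t_i,s_j}$ and the bosonic amplitude is $\mathrm{perm}\,S/\sqrt{\prod_k\mu_k(\vec s)!\prod_k\mu_k(\vec t)!}$ with $\mu_k(\vec t)=|\{i:t_i=k\}|$; an output is suppressed if its amplitude is zero. *)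

theory Defs
  imports Complex_Main "HOL-Combinatorics.Permutations"
begin

text \<open>Sylvester matrix H(2^p), modes/indices 0-based (rows and columns 0..2^p-1),
  defined by the recursive block construction.\<close>
fun sylvester :: "nat \<Rightarrow> nat \<Rightarrow> nat \<Rightarrow> int" where
  "sylvester 0 i j = 1"
| "sylvester (Suc p) i j =
     (let h = 2 ^ p in
      if i < h \<and> j < h then sylvester p i j
      else if i < h then sylvester p i (j - h)
      else if j < h then sylvester p (i - h) j
      else - sylvester p (i - h) (j - h))"

definition perm :: "nat \<Rightarrow> (nat \<Rightarrow> nat \<Rightarrow> 'a::comm_ring_1) \<Rightarrow> 'a" where
  "perm n A = (\<Sum>\<sigma>\<in>{\<sigma>. \<sigma> permutes {..<n}}. \<Prod>i<n. A i (\<sigma> i))"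

definition mult :: "nat list \<Rightarrow> nat \<Rightarrow> nat" where
  "mult t k = length (filter (\<lambda>x. x = k) t)"

definition scattering :: "(nat \<Rightarrow> nat \<Rightarrow> complex) \<Rightarrow> nat list \<Rightarrow> nat list \<Rightarrow> nat \<Rightarrow> nat \<Rightarrow> complex" where
  "scattering U s t i j = U (t ! i) (s ! j)"

text \<open>Bosonic amplitude; modes not occurring contribute 0! = 1 to the products.\<close>
definition amplitude :: "(nat \<Rightarrow> nat \<Rightarrow> complex) \<Rightarrow> nat list \<Rightarrow> nat list \<Rightarrow> complex" where
  "amplitude U s t = perm (length s) (scattering U s t) /
     complex_of_real (sqrt (real ((\<Prod>k\<in>set s. fact (mult s k)) * (\<Prod>k\<in>set t. fact (mult t k)))))"

definition suppressed :: "(nat \<Rightarrow> nat \<Rightarrow> complex) \<Rightarrow> nat list \<Rightarrow> nat list \<Rightarrow> bool" where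
  "suppressed U s t \<longleftrightarrow> amplitude U s t = 0"

end

theory Submission
  imports Defs
begin

text \<open>
  We compute the permanent 2-adically, for families of columns of Sylvester matrices. Let the
  columns v c (c \<in> C, card C = 2 * h) of H(2 * h) form a square matrix, and pair row i with
  row i + h. A bijection from rows to columns is a bijection that is sorted on each row pair,
  followed by swaps of some row pairs; summing over the swaps, two columns x, y placed on rows
  i, i + h contribute 2 * (\<plusminus>1) * H(h)(i, x XOR y) if they lie in the same half of H(2 * h), and
  0 otherwise, because the columns of H(h) are characters under XOR. The surviving
  configurations are a perfect matching of C inside the two halves together with an
  enumeration of its pairs, so the permanent equals 2^h times a signed sum, over these matchings,
  of permanents of the merged families of h columns of H(h).

  If all row products of the family are 1 (for H(2^p) itself this holds when p \<ge> 2), the same is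
  true of every merged family, and both halves contain an even number of columns, so the number
  of matchings is odd. By induction the permanent is congruent to 2^(2^k - 1) modulo 2^(2^k);
  in particular perm H(2^p) \<noteq> 0, and the amplitude of the output with one boson per mode is
  this permanent divided by a nonzero normalisation.
\<close>

unbundle bit_operations_syntax

section \<open>The Sylvester matrix\<close>

lemma sylvester_Suc_mod:
  assumes "i < 2 * 2^k" "j < 2 * 2^k"
  shows "sylvester (Suc k) i j =
    sylvester k (i mod 2^k) (j mod 2^k) * (if 2^k \<le> i \<and> 2^k \<le> j then -1 else 1)"
  using assms by (auto simp: Let_def le_mod_geq not_less)

lemma sylvester_mult_self: "sylvester k i j * sylvester k i j = 1"
proof -
  have "sylvester k i j \<in> {1, -1}"
    by (induction k arbitrary: i j) (auto simp: Let_def)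
  then show ?thesis by auto
qed

lemma sylvester_0_left: "sylvester k 0 j = 1"
  by (induction k arbitrary: j) (auto simp: Let_def)

declare sylvester.simps(2) [simp del]

lemma xor_less_power:
  fixes x y :: nat
  assumes "x < 2^k" "y < 2^k"
  shows "x XOR y < 2^k"
proof -
  have "take_bit k (x XOR y) = x XOR y"
    using assms by (simp add: take_bit_nat_eq_self)
  then show ?thesis by (metis take_bit_nat_less_exp)
qed

lemma power_le_iff_bit:
  fixes x :: nat
  assumes "x < 2 * 2^k"
  shows "2^k \<le> x \<longleftrightarrow> bit x k"
proof -
  have "x div 2^k < 2" using assms by (simp add: div_less_iff_less_mult mult.commute)
  then have "bit x k \<longleftrightarrow> x div 2^k = 1" by (auto simp: bit_iff_odd less_2_cases_iff)
  also have "\<dots> \<longleftrightarrow> 2^k \<le> x"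
    using \<open>x div 2^k < 2\<close> div_greater_zero_iff[of x "2^k"] by (auto simp: less_2_cases_iff)
  finally show ?thesis by simp
qed

lemma sylvester_xor:
  assumes "i < 2^k" "x < 2^k" "y < 2^k"
  shows "sylvester k i (x XOR y) = sylvester k i x * sylvester k i y"
  using assms
proof (induction k arbitrary: i x y)
  case 0
  then show ?case by simp
next
  case (Suc k)
  let ?h = "2^k :: nat"
  have bounds: "i < 2 * ?h" "x < 2 * ?h" "y < 2 * ?h" "x XOR y < 2 * ?h"
    using Suc.prems xor_less_power[of x "Suc k" y] by auto
  have low: "(x XOR y) mod ?h = (x mod ?h) XOR (y mod ?h)"
    by (metis take_bit_eq_mod take_bit_xor)
  have top: "?h \<le> x XOR y \<longleftrightarrow> (?h \<le> x) \<noteq> (?h \<le> y)"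
    using bounds by (simp add: power_le_iff_bit bit_xor_iff)
  have "sylvester k (i mod ?h) ((x mod ?h) XOR (y mod ?h)) =
      sylvester k (i mod ?h) (x mod ?h) * sylvester k (i mod ?h) (y mod ?h)"
    by (rule Suc.IH) auto
  then show ?case
    unfolding sylvester_Suc_mod[OF bounds(1) bounds(4)] sylvester_Suc_mod[OF bounds(1) bounds(2)]
      sylvester_Suc_mod[OF bounds(1) bounds(3)] low top
    by (cases "?h \<le> i"; cases "?h \<le> x"; cases "?h \<le> y") simp_all
qed

text \<open>On the rows i and i + 2^k (i < 2^k) column x of H(2^(k+1)) reads H(2^k)(i, x mod 2^k) and
  half_sign k x * H(2^k)(i, x mod 2^k).\<close>

definition half_sign :: "nat \<Rightarrow> nat \<Rightarrow> int" where
  "half_sign k x = (if 2^k \<le> x then -1 else 1)"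

definition low_xor :: "nat \<Rightarrow> nat \<Rightarrow> nat \<Rightarrow> nat" where
  "low_xor k x y = (x mod 2^k) XOR (y mod 2^k)"

lemma sylvester_Suc_middle_row:
  assumes "x < 2 * 2^k"
  shows "sylvester (Suc k) (2^k) x = half_sign k x"
  using sylvester_Suc_mod[of "2^k" k x] assms by (simp add: sylvester_0_left half_sign_def)

lemma prod_half_sign:
  "finite A \<Longrightarrow> (\<Prod>a\<in>A. half_sign k (v a)) = (-1) ^ card {a\<in>A. 2^k \<le> v a}"
  by (simp add: half_sign_def prod.If_cases Int_def)

lemma sylvester_Suc_pair:
  assumes i: "i < 2^k" and x: "x < 2 * 2^k" and y: "y < 2 * 2^k"
  shows "sylvester (Suc k) i x * sylvester (Suc k) (i + 2^k) y +
      sylvester (Suc k) i y * sylvester (Suc k) (i + 2^k) x =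
    (if (2^k \<le> x) = (2^k \<le> y) then 2 * (half_sign k x * sylvester k i (low_xor k x y)) else 0)"
proof -
  have low: "sylvester (Suc k) i z = sylvester k i (z mod 2^k)" if "z < 2 * 2^k" for z
    using sylvester_Suc_mod[OF _ that, of i] i by simp
  have high: "sylvester (Suc k) (i + 2^k) z = sylvester k i (z mod 2^k) * half_sign k z"
    if "z < 2 * 2^k" for z
    using sylvester_Suc_mod[OF _ that, of "i + 2^k"] i by (simp add: half_sign_def)
  have "sylvester k i (low_xor k x y) = sylvester k i (x mod 2^k) * sylvester k i (y mod 2^k)"
    unfolding low_xor_def using i by (intro sylvester_xor) auto
  then show ?thesis
    unfolding low[OF x] low[OF y] high[OF x] high[OF y]
    by (simp add: half_sign_def algebra_simps)
qed

lemma prod_lessThan_double: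
  fixes g :: "nat \<Rightarrow> 'a::comm_monoid_mult"
  shows "(\<Prod>i<2 * h. g i) = (\<Prod>i<h. g i * g (i + h))"
proof -
  have "(\<Prod>i<2 * h. g i) = (\<Prod>i<h. g i) * (\<Prod>i\<in>{h..<h + h}. g i)"
    by (simp add: mult_2 lessThan_atLeast0 prod.atLeastLessThan_concat)
  also have "(\<Prod>i\<in>{h..<h + h}. g i) = (\<Prod>i<h. g (i + h))"
    using prod.shift_bounds_nat_ivl[of g 0 h h] by (simp add: lessThan_atLeast0)
  finally show ?thesis by (simp add: prod.distrib)
qed

lemma prod_sylvester_row:
  assumes "2 \<le> p" "i < 2^p"
  shows "(\<Prod>j<2^p. sylvester p i j) = 1"
proof -
  obtain k where p: "p = Suc k" and "1 \<le> k" using assms(1) by (cases p) auto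
  let ?h = "2^k :: nat"
  let ?sign = "if ?h \<le> i then -1 else 1 :: int"
  have "(\<Prod>j<2^p. sylvester p i j) = (\<Prod>j<?h. sylvester p i j * sylvester p i (j + ?h))"
    unfolding p by (simp add: prod_lessThan_double)
  also have "\<dots> = (\<Prod>j<?h. ?sign)"
  proof (rule prod.cong[OF refl])
    fix j assume "j \<in> {..<?h}"
    then have i: "i < 2 * ?h" and j: "j < 2 * ?h" "j + ?h < 2 * ?h" using assms(2) p by auto
    then show "sylvester p i j * sylvester p i (j + ?h) = ?sign"
      unfolding p sylvester_Suc_mod[OF i j(1)] sylvester_Suc_mod[OF i j(2)]
      by (auto simp: sylvester_mult_self)
  qed
  also have "\<dots> = 1"
    using \<open>1 \<le> k\<close> by (simp add: minus_one_power_iff Suc_le_eq)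
  finally show ?thesis .
qed

definition bijections :: "'a set \<Rightarrow> 'b set \<Rightarrow> ('a \<Rightarrow> 'b) set" where
  "bijections A B = {f \<in> A \<rightarrow>\<^sub>E B. bij_betw f A B}"

lemma finite_bijections:
  assumes "finite A"
  shows "finite (bijections A B)"
proof (cases "finite B")
  case True
  show ?thesis
    unfolding bijections_def
    by (rule finite_subset[of _ "A \<rightarrow>\<^sub>E B"]) (use assms True in \<open>auto intro: finite_PiE\<close>)
next
  case False
  then have "bijections A B = {}" using assms bij_betw_finite by (auto simp: bijections_def)
  then show ?thesis by simp
qed

lemma perm_eq_sum_bijections: "perm n A = (\<Sum>f\<in>bijections {..<n} {..<n}. \<Prod>i<n. A i (f i))"
proof -
  have bij: "bij_betw (\<lambda>\<sigma>. restrict \<sigma> {..<n}) {\<sigma>. \<sigma> permutes {..<n}} (bijections {..<n} {..<n})"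
  proof (rule bij_betw_byWitness[where f'="\<lambda>f. restrict_id f {..<n}"])
    show "\<forall>\<sigma>\<in>{\<sigma>. \<sigma> permutes {..<n}}. restrict_id (restrict \<sigma> {..<n}) {..<n} = \<sigma>"
      by (auto simp: fun_eq_iff restrict_id_def permutes_not_in)
    show "\<forall>f\<in>bijections {..<n} {..<n}. restrict (restrict_id f {..<n}) {..<n} = f"
      by (auto simp: fun_eq_iff bijections_def PiE_iff extensional_def)
    show "(\<lambda>\<sigma>. restrict \<sigma> {..<n}) ` {\<sigma>. \<sigma> permutes {..<n}} \<subseteq> bijections {..<n} {..<n}"
    proof
      fix f assume "f \<in> (\<lambda>\<sigma>. restrict \<sigma> {..<n}) ` {\<sigma>. \<sigma> permutes {..<n}}"
      then obtain \<sigma> where \<sigma>: "\<sigma> permutes {..<n}" and f: "f = restrict \<sigma> {..<n}" by auto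
      have "bij_betw f {..<n} {..<n}"
        unfolding f using permutes_imp_bij[OF \<sigma>] by (rule bij_betw_cong[THEN iffD1, rotated]) simp
      moreover have "f \<in> {..<n} \<rightarrow>\<^sub>E {..<n}"
        unfolding f using permutes_in_image[OF \<sigma>] by auto
      ultimately show "f \<in> bijections {..<n} {..<n}" by (simp add: bijections_def)
    qed
    show "(\<lambda>f. restrict_id f {..<n}) ` bijections {..<n} {..<n} \<subseteq> {\<sigma>. \<sigma> permutes {..<n}}"
      by (auto simp: bijections_def intro: permutes_restrict_id)
  qed
  have "perm n A = (\<Sum>\<sigma>\<in>{\<sigma>. \<sigma> permutes {..<n}}. \<Prod>i<n. A i (restrict \<sigma> {..<n} i))"
    unfolding perm_def by (intro sum.cong prod.cong) auto
  also have "\<dots> = (\<Sum>f\<in>bijections {..<n} {..<n}. \<Prod>i<n. A i (f i))"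
    by (rule sum.reindex_bij_betw[OF bij])
  finally show ?thesis .
qed

lemma perm_cong:
  assumes "\<And>i j. i < n \<Longrightarrow> j < n \<Longrightarrow> A i j = B i j"
  shows "perm n A = perm n B"
  unfolding perm_def
proof (intro sum.cong prod.cong refl)
  fix \<sigma> i assume "\<sigma> \<in> {\<sigma>. \<sigma> permutes {..<n}}" "i \<in> {..<n}"
  then have "i < n" "\<sigma> i < n" using permutes_in_image[of \<sigma> "{..<n}" i] by auto
  then show "A i (\<sigma> i) = B i (\<sigma> i)" by (rule assms)
qed

lemma perm_divide:
  fixes A :: "nat \<Rightarrow> nat \<Rightarrow> 'a::field"
  shows "perm n (\<lambda>i j. A i j / c) = perm n A / c ^ n"
  unfolding perm_def by (simp add: prod_dividef sum_divide_distrib)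

lemma of_int_perm: "perm n (\<lambda>i j. of_int (A i j)) = of_int (perm n A)"
  unfolding perm_def by (simp add: of_int_sum of_int_prod)

section \<open>Pairing row i with row i + h\<close>

definition swap_halves :: "nat \<Rightarrow> nat set \<Rightarrow> nat \<Rightarrow> nat" where
  "swap_halves h S j =
    (if j < h \<and> j \<in> S then j + h else if h \<le> j \<and> j < 2 * h \<and> j - h \<in> S then j - h else j)"

lemma swap_halves_swap_halves [simp]: "swap_halves h S (swap_halves h S j) = j"
  unfolding swap_halves_def by auto

lemma swap_halves_low: "i < h \<Longrightarrow> swap_halves h S i = (if i \<in> S then i + h else i)"
  unfolding swap_halves_def by auto

lemma swap_halves_high: "i < h \<Longrightarrow> swap_halves h S (i + h) = (if i \<in> S then i else i + h)"
  unfolding swap_halves_def by auto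

lemma swap_halves_half_cases:
  assumes "j < 2 * h"
  obtains i where "i < h" "j = i" "swap_halves h {..<h} j = i + h"
    | i where "i < h" "j = i + h" "swap_halves h {..<h} j = i"
proof (cases "j < h")
  case True
  then show ?thesis using that(1) by (simp add: swap_halves_low)
next
  case False
  then have "j - h < h" "j = (j - h) + h" using assms by auto
  then show ?thesis using that(2) swap_halves_high[of "j - h" h "{..<h}"] by auto
qed

lemma swap_halves_less_iff [simp]: "swap_halves h S j < 2 * h \<longleftrightarrow> j < 2 * h"
  unfolding swap_halves_def by auto

lemma bij_betw_swap_halves: "bij_betw (swap_halves h S) {..<2 * h} {..<2 * h}"
  by (rule bij_betw_byWitness[where f'="swap_halves h S"]) auto

lemma bijections_comp_swap_halves:
  assumes "f \<in> bijections {..<2 * h} C"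
  shows "f \<circ> swap_halves h S \<in> bijections {..<2 * h} C"
proof -
  have "f \<circ> swap_halves h S \<in> {..<2 * h} \<rightarrow>\<^sub>E C"
    using assms by (auto simp: bijections_def PiE_iff extensional_def swap_halves_def)
  moreover have "bij_betw (f \<circ> swap_halves h S) {..<2 * h} C"
    by (rule bij_betw_trans[OF bij_betw_swap_halves]) (use assms in \<open>simp add: bijections_def\<close>)
  ultimately show ?thesis by (simp add: bijections_def)
qed

definition pair_sorted :: "nat \<Rightarrow> 'c::linorder set \<Rightarrow> (nat \<Rightarrow> 'c) set" where
  "pair_sorted h C = {f \<in> bijections {..<2 * h} C. \<forall>i<h. f i < f (i + h)}"

lemma pair_sorted_swap_halves_eq:
  assumes f: "f \<in> pair_sorted h C" and g: "g \<in> pair_sorted h C"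
    and "S \<subseteq> {..<h}" "T \<subseteq> {..<h}" and eq: "f \<circ> swap_halves h S = g \<circ> swap_halves h T"
  shows "S = T"
proof (rule ccontr)
  assume "S \<noteq> T"
  then obtain i where i: "i < h" "i \<in> S \<longleftrightarrow> i \<notin> T" using assms(3,4) by blast
  have "f (swap_halves h S i) = g (swap_halves h T i)"
    and "f (swap_halves h S (i + h)) = g (swap_halves h T (i + h))"
    using eq by (metis comp_apply)+
  then have "f i = g (i + h) \<and> f (i + h) = g i \<or> f (i + h) = g i \<and> f i = g (i + h)"
    using i by (auto simp: swap_halves_low swap_halves_high split: if_splits)
  moreover have "f i < f (i + h)" "g i < g (i + h)"
    using f g i by (auto simp: pair_sorted_def)
  ultimately show False by auto
qed

lemma bij_betw_pair_sorted_swap_halves: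
  "bij_betw (\<lambda>(f, S). f \<circ> swap_halves h S) (pair_sorted h C \<times> Pow {..<h}) (bijections {..<2 * h} C)"
proof (rule bij_betwI')
  fix x y assume "x \<in> pair_sorted h C \<times> Pow {..<h}" "y \<in> pair_sorted h C \<times> Pow {..<h}"
  moreover obtain f S g T where "x = (f, S)" "y = (g, T)" by (cases x, cases y)
  ultimately show "((\<lambda>(f, S). f \<circ> swap_halves h S) x = (\<lambda>(f, S). f \<circ> swap_halves h S) y) = (x = y)"
    using pair_sorted_swap_halves_eq[of f h C g S T]
    by (auto simp: fun_eq_iff) (metis swap_halves_swap_halves)
next
  fix x assume "x \<in> pair_sorted h C \<times> Pow {..<h}"
  then show "(\<lambda>(f, S). f \<circ> swap_halves h S) x \<in> bijections {..<2 * h} C"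
    by (auto simp: pair_sorted_def intro: bijections_comp_swap_halves)
next
  fix g assume g: "g \<in> bijections {..<2 * h} C"
  define S where "S = {i. i < h \<and> g (i + h) < g i}"
  have inj: "inj_on g {..<2 * h}" using g by (auto simp: bijections_def bij_betw_def)
  have "(g \<circ> swap_halves h S) i < (g \<circ> swap_halves h S) (i + h)" if "i < h" for i
  proof (cases "i \<in> S")
    case False
    then have "g i \<le> g (i + h)" using that by (auto simp: S_def)
    moreover have "g i \<noteq> g (i + h)" using inj_onD[OF inj, of i "i + h"] that by auto
    ultimately show ?thesis using False that by (simp add: swap_halves_low swap_halves_high)
  qed (use that in \<open>simp add: S_def swap_halves_low swap_halves_high\<close>)
  then have "g \<circ> swap_halves h S \<in> pair_sorted h C"
    using bijections_comp_swap_halves[OF g] by (simp add: pair_sorted_def)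
  moreover have "g = (g \<circ> swap_halves h S) \<circ> swap_halves h S" by (auto simp: fun_eq_iff)
  ultimately show "\<exists>x\<in>pair_sorted h C \<times> Pow {..<h}. g = (\<lambda>(f, S). f \<circ> swap_halves h S) x"
    by (auto simp: S_def intro!: bexI[of _ "(g \<circ> swap_halves h S, S)"])
qed

text \<open>Every bijection is a pair-sorted one composed with the swaps of some row pairs, so the sum
  over the swaps factorises over the row pairs.\<close>

lemma sum_bijections_pair_sorted:
  fixes A :: "nat \<Rightarrow> 'c::linorder \<Rightarrow> 'a::comm_semiring_1"
  shows "(\<Sum>f\<in>bijections {..<2 * h} C. \<Prod>i<2 * h. A i (f i)) =
    (\<Sum>f\<in>pair_sorted h C. \<Prod>i<h. A i (f i) * A (i + h) (f (i + h)) + A i (f (i + h)) * A (i + h) (f i))"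
proof -
  let ?kept = "\<lambda>f i. A i (f i) * A (i + h) (f (i + h))"
  let ?swapped = "\<lambda>f i. A i (f (i + h)) * A (i + h) (f i)"
  have "(\<Sum>f\<in>bijections {..<2 * h} C. \<Prod>i<2 * h. A i (f i)) =
      (\<Sum>(f, S)\<in>pair_sorted h C \<times> Pow {..<h}. \<Prod>i<2 * h. A i (f (swap_halves h S i)))"
    by (subst sum.reindex_bij_betw[OF bij_betw_pair_sorted_swap_halves, symmetric])
      (simp add: split_def)
  also have "\<dots> = (\<Sum>f\<in>pair_sorted h C. \<Sum>S\<in>Pow {..<h}. (\<Prod>i\<in>S. ?swapped f i) * (\<Prod>i\<in>{..<h} - S. ?kept f i))"
  proof -
    have "(\<Prod>i<2 * h. A i (f (swap_halves h S i))) = (\<Prod>i\<in>S. ?swapped f i) * (\<Prod>i\<in>{..<h} - S. ?kept f i)"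
      if "S \<subseteq> {..<h}" for f S
    proof -
      have "(\<Prod>i<2 * h. A i (f (swap_halves h S i))) = (\<Prod>i<h. if i \<in> S then ?swapped f i else ?kept f i)"
        by (simp add: prod_lessThan_double) (rule prod.cong; simp add: swap_halves_low swap_halves_high)
      also have "\<dots> = (\<Prod>i\<in>S. ?swapped f i) * (\<Prod>i\<in>{..<h} - S. ?kept f i)"
        using that by (simp add: prod.If_cases Int_absorb1 Diff_eq)
      finally show ?thesis .
    qed
    then show ?thesis
      unfolding sum.cartesian_product by (intro sum.cong refl) auto
  qed
  also have "\<dots> = (\<Sum>f\<in>pair_sorted h C. \<Prod>i<h. ?swapped f i + ?kept f i)"
    by (intro sum.cong refl prod_add[symmetric]) simp
  also have "\<dots> = (\<Sum>f\<in>pair_sorted h C. \<Prod>i<h. ?kept f i + ?swapped f i)"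
    by (simp add: add.commute)
  finally show ?thesis .
qed

section \<open>Class-preserving perfect matchings\<close>

text \<open>Perfect matchings of C inside the classes of t, encoded as fixed-point-free involutions.\<close>

definition matchings :: "('c \<Rightarrow> 'd) \<Rightarrow> 'c set \<Rightarrow> ('c \<Rightarrow> 'c) set" where
  "matchings t C = {\<mu>. (\<forall>z. z \<notin> C \<longrightarrow> \<mu> z = z) \<and>
     (\<forall>z\<in>C. \<mu> z \<in> C \<and> \<mu> z \<noteq> z \<and> \<mu> (\<mu> z) = z \<and> t (\<mu> z) = t z)}"

lemma matchingsD:
  assumes "\<mu> \<in> matchings t C" "z \<in> C"
  shows "\<mu> z \<in> C" "\<mu> z \<noteq> z" "t (\<mu> z) = t z"
  using assms by (auto simp: matchings_def)

lemma matchings_outside: "\<mu> \<in> matchings t C \<Longrightarrow> z \<notin> C \<Longrightarrow> \<mu> z = z"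
  by (auto simp: matchings_def)

lemma matchings_involution: "\<mu> \<in> matchings t C \<Longrightarrow> \<mu> (\<mu> z) = z"
  by (cases "z \<in> C") (auto simp: matchings_def)

lemma matchings_permutes: "\<mu> \<in> matchings t C \<Longrightarrow> \<mu> permutes C"
  by (rule bij_imp_permutes)
    (auto simp: matchings_outside matchingsD intro!: bij_betw_byWitness[where f'=\<mu>]
      dest: matchings_involution)

lemma finite_matchings: "finite C \<Longrightarrow> finite (matchings t C)"
  by (rule finite_subset[of _ "{\<mu>. \<mu> permutes C}"]) (auto intro: matchings_permutes finite_permutations)

lemma matchings_empty: "matchings t {} = {id}"
  by (auto simp: matchings_def)

lemma matchings_remove_pair:
  assumes \<mu>: "\<mu> \<in> matchings t C" and "\<mu> x = y"
  shows "(\<lambda>z. if z = x \<or> z = y then z else \<mu> z) \<in> matchings t (C - {x, y})"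
proof -
  have "\<mu> y = x" using assms matchings_involution by metis
  then show ?thesis
    using assms matchings_involution[OF \<mu>] matchingsD[OF \<mu>] matchings_outside[OF \<mu>]
    by (auto simp: matchings_def) metis+
qed

lemma matchings_insert_pair:
  assumes \<nu>: "\<nu> \<in> matchings t (C - {x, y})" and "x \<in> C" "y \<in> C" "x \<noteq> y" "t x = t y"
  shows "\<nu>(x := y, y := x) \<in> matchings t C"
  using assms matchings_involution[OF \<nu>] matchingsD[OF \<nu>] matchings_outside[OF \<nu>]
  by (auto simp: matchings_def)

lemma card_matchings_fixing_pair:
  assumes "x \<in> C" "y \<in> C" "x \<noteq> y" "t x = t y"
  shows "card {\<mu>\<in>matchings t C. \<mu> x = y} = card (matchings t (C - {x, y}))"
proof (rule bij_betw_same_card, rule bij_betw_byWitness[where f'="\<lambda>\<nu>. \<nu>(x := y, y := x)"])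
  show "\<forall>\<mu>\<in>{\<mu>\<in>matchings t C. \<mu> x = y}. ((\<lambda>z. if z = x \<or> z = y then z else \<mu> z))(x := y, y := x) = \<mu>"
    using assms matchings_involution by (fastforce simp: fun_eq_iff)
  show "\<forall>\<nu>\<in>matchings t (C - {x, y}). (\<lambda>z. if z = x \<or> z = y then z else (\<nu>(x := y, y := x)) z) = \<nu>"
    using assms matchings_outside by (fastforce simp: fun_eq_iff)
  show "(\<lambda>\<mu> z. if z = x \<or> z = y then z else \<mu> z) ` {\<mu>\<in>matchings t C. \<mu> x = y} \<subseteq> matchings t (C - {x, y})"
    by (auto intro: matchings_remove_pair)
  show "(\<lambda>\<nu>. \<nu>(x := y, y := x)) ` matchings t (C - {x, y}) \<subseteq> {\<mu>\<in>matchings t C. \<mu> x = y}"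
    using assms by (auto intro: matchings_insert_pair)
qed

lemma even_classes_Diff_pair:
  assumes "finite C" "x \<in> C" "y \<in> C" "x \<noteq> y" "t x = t y"
    and even: "\<And>c. c \<in> C \<Longrightarrow> even (card {c'\<in>C. t c' = t c})"
    and "c \<in> C - {x, y}"
  shows "even (card {c'\<in>C - {x, y}. t c' = t c})"
proof (cases "t c = t x")
  case True
  then have "{c'\<in>C - {x, y}. t c' = t c} = {c'\<in>C. t c' = t c} - {x, y}" by auto
  moreover have "{x, y} \<subseteq> {c'\<in>C. t c' = t c}" using assms True by auto
  ultimately show ?thesis
    using assms even[of c] by (simp add: card_Diff_subset)
next
  case False
  then have "{c'\<in>C - {x, y}. t c' = t c} = {c'\<in>C. t c' = t c}" using assms by auto
  then show ?thesis using assms even[of c] by simp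
qed

lemma card_matchings_partner:
  assumes "finite C" "x \<in> C"
  shows "card (matchings t C) = (\<Sum>y\<in>{y\<in>C. t y = t x \<and> y \<noteq> x}. card (matchings t (C - {x, y})))"
proof -
  let ?D = "{y\<in>C. t y = t x \<and> y \<noteq> x}"
  have "matchings t C = (\<Union>y\<in>?D. {\<mu>\<in>matchings t C. \<mu> x = y})"
    using matchingsD[of _ t C x] assms(2) by auto
  then have "card (matchings t C) = card (\<Union>y\<in>?D. {\<mu>\<in>matchings t C. \<mu> x = y})"
    by simp
  also have "\<dots> = (\<Sum>y\<in>?D. card {\<mu>\<in>matchings t C. \<mu> x = y})"
    using assms(1) finite_matchings[OF assms(1), of t] by (intro card_UN_disjoint) auto
  also have "\<dots> = (\<Sum>y\<in>?D. card (matchings t (C - {x, y})))"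
    using assms(2) by (intro sum.cong refl card_matchings_fixing_pair) auto
  finally show ?thesis .
qed

lemma odd_card_matchings:
  assumes "finite C" "\<And>c. c \<in> C \<Longrightarrow> even (card {c'\<in>C. t c' = t c})"
  shows "odd (card (matchings t C))"
  using assms
proof (induction "card C" arbitrary: C rule: less_induct)
  case less
  show ?case
  proof (cases "C = {}")
    case True
    then show ?thesis by (simp add: matchings_empty)
  next
    case False
    then obtain x where x: "x \<in> C" by auto
    define D where "D = {y\<in>C. t y = t x \<and> y \<noteq> x}"
    have "finite D" using less.prems by (simp add: D_def)
    have "{c\<in>C. t c = t x} = insert x D" using x by (auto simp: D_def)
    then have "odd (card D)" using less.prems(2)[OF x] \<open>finite D\<close> by (simp add: D_def)
    have "odd (card (matchings t (C - {x, y})))" if "y \<in> D" for y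
    proof (rule less.hyps)
      show "card (C - {x, y}) < card C"
        using that x less.prems(1) by (intro psubset_card_mono) (auto simp: D_def)
      show "even (card {c'\<in>C - {x, y}. t c' = t c})" if "c \<in> C - {x, y}" for c
        using \<open>y \<in> D\<close> x less.prems that by (intro even_classes_Diff_pair) (auto simp: D_def)
    qed (use less.prems in auto)
    then have "{y\<in>D. odd (card (matchings t (C - {x, y})))} = D" by auto
    moreover have "card (matchings t C) = (\<Sum>y\<in>D. card (matchings t (C - {x, y})))"
      using card_matchings_partner[OF less.prems(1) x] by (simp add: D_def)
    ultimately show ?thesis
      using even_sum_iff[OF \<open>finite D\<close>, of "\<lambda>y. card (matchings t (C - {x, y}))"] \<open>odd (card D)\<close>
      by simp
  qed
qed

definition lower_ends :: "'c::linorder set \<Rightarrow> ('c \<Rightarrow> 'c) \<Rightarrow> 'c set" where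
  "lower_ends C \<mu> = {a\<in>C. a < \<mu> a}"

lemma finite_lower_ends: "finite C \<Longrightarrow> finite (lower_ends C \<mu>)"
  by (simp add: lower_ends_def)

lemma lower_ends_Int_image:
  assumes "\<mu> \<in> matchings t C"
  shows "lower_ends C \<mu> \<inter> \<mu> ` lower_ends C \<mu> = {}"
  using matchings_involution[OF assms] by (fastforce simp: lower_ends_def)

lemma lower_ends_Un_image:
  assumes \<mu>: "\<mu> \<in> matchings t C"
  shows "lower_ends C \<mu> \<union> \<mu> ` lower_ends C \<mu> = C"
proof -
  have "c \<in> \<mu> ` lower_ends C \<mu>" if "c \<in> C" "c \<notin> lower_ends C \<mu>" for c
    using that matchingsD[OF \<mu> that(1)] matchings_involution[OF \<mu>, of c]
    by (auto simp: lower_ends_def image_iff intro!: bexI[of _ "\<mu> c"])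
  then show ?thesis using matchingsD(1)[OF \<mu>] by (auto simp: lower_ends_def)
qed

lemma inj_on_matching: "\<mu> \<in> matchings t C \<Longrightarrow> inj_on \<mu> A"
  by (metis inj_on_inverseI matchings_involution)

lemma card_lower_ends:
  assumes "finite C" "\<mu> \<in> matchings t C"
  shows "card C = 2 * card (lower_ends C \<mu>)"
proof -
  have "card C = card (lower_ends C \<mu>) + card (\<mu> ` lower_ends C \<mu>)"
    using assms lower_ends_Un_image[OF assms(2)] lower_ends_Int_image[OF assms(2)]
    by (metis card_Un_disjoint finite_imageI finite_lower_ends)
  then show ?thesis using card_image[OF inj_on_matching[OF assms(2)]] by simp
qed

lemma prod_lower_ends:
  fixes g :: "'c::linorder \<Rightarrow> 'a::comm_monoid_mult"
  assumes "finite C" "\<mu> \<in> matchings t C"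
  shows "(\<Prod>a\<in>lower_ends C \<mu>. g a * g (\<mu> a)) = (\<Prod>c\<in>C. g c)"
proof -
  have "(\<Prod>a\<in>lower_ends C \<mu>. g a * g (\<mu> a)) = (\<Prod>a\<in>lower_ends C \<mu>. g a) * (\<Prod>a\<in>\<mu> ` lower_ends C \<mu>. g a)"
    by (simp add: prod.distrib prod.reindex[OF inj_on_matching[OF assms(2)]])
  also have "\<dots> = (\<Prod>c\<in>C. g c)"
    using assms lower_ends_Un_image[OF assms(2)] lower_ends_Int_image[OF assms(2)]
    by (metis finite_imageI finite_lower_ends prod.union_disjoint)
  finally show ?thesis .
qed

text \<open>A pair-sorted bijection f whose row pairs stay inside the classes of t amounts to the matching
  that pairs f i with f (i + h), together with the enumeration i \<mapsto> f i of the lower ends.\<close>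

definition class_pair_sorted :: "nat \<Rightarrow> ('c::linorder \<Rightarrow> 'd) \<Rightarrow> 'c set \<Rightarrow> (nat \<Rightarrow> 'c) set" where
  "class_pair_sorted h t C = {f\<in>pair_sorted h C. \<forall>i<h. t (f i) = t (f (i + h))}"

definition arrange :: "nat \<Rightarrow> ('c \<Rightarrow> 'c) \<Rightarrow> (nat \<Rightarrow> 'c) \<Rightarrow> nat \<Rightarrow> 'c" where
  "arrange h \<mu> \<beta> j = (if j < h then \<beta> j else if j < 2 * h then \<mu> (\<beta> (j - h)) else undefined)"

definition induced_matching :: "nat \<Rightarrow> 'c set \<Rightarrow> (nat \<Rightarrow> 'c) \<Rightarrow> 'c \<Rightarrow> 'c" where
  "induced_matching h C f c =
    (if c \<in> C then f (swap_halves h {..<h} (inv_into {..<2 * h} f c)) else c)"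

lemma arrange_in_bijections:
  assumes \<mu>: "\<mu> \<in> matchings t C" and \<beta>: "\<beta> \<in> bijections {..<h} (lower_ends C \<mu>)"
  shows "arrange h \<mu> \<beta> \<in> bijections {..<2 * h} C"
proof -
  let ?E = "lower_ends C \<mu>"
  have "bij_betw \<beta> {..<h} ?E" using \<beta> by (simp add: bijections_def)
  then have low: "bij_betw (arrange h \<mu> \<beta>) {..<h} ?E"
    by (rule bij_betw_cong[THEN iffD1, rotated]) (simp add: arrange_def)
  have "bij_betw (\<lambda>j. j - h) {h..<2 * h} {..<h}"
    by (rule bij_betw_byWitness[where f'="\<lambda>i. i + h"]) auto
  then have "bij_betw (\<mu> \<circ> \<beta> \<circ> (\<lambda>j. j - h)) {h..<2 * h} (\<mu> ` ?E)"
    using \<open>bij_betw \<beta> {..<h} ?E\<close> inj_on_imp_bij_betw[OF inj_on_matching[OF \<mu>]]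
    by (blast intro: bij_betw_trans)
  then have high: "bij_betw (arrange h \<mu> \<beta>) {h..<2 * h} (\<mu> ` ?E)"
    by (rule bij_betw_cong[THEN iffD1, rotated]) (simp add: arrange_def)
  have "bij_betw (arrange h \<mu> \<beta>) ({..<h} \<union> {h..<2 * h}) (?E \<union> \<mu> ` ?E)"
    by (rule bij_betw_combine[OF low high lower_ends_Int_image[OF \<mu>]])
  moreover have "{..<h} \<union> {h..<2 * h} = {..<2 * h}" by auto
  ultimately have "bij_betw (arrange h \<mu> \<beta>) {..<2 * h} C"
    by (simp add: lower_ends_Un_image[OF \<mu>])
  moreover have "arrange h \<mu> \<beta> \<in> extensional {..<2 * h}"
    by (simp add: arrange_def extensional_def)
  ultimately show ?thesis
    by (auto simp: bijections_def PiE_iff bij_betw_def)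
qed

lemma arrange_in_class_pair_sorted:
  assumes \<mu>: "\<mu> \<in> matchings t C" and \<beta>: "\<beta> \<in> bijections {..<h} (lower_ends C \<mu>)"
  shows "arrange h \<mu> \<beta> \<in> class_pair_sorted h t C"
proof -
  have "\<beta> i \<in> lower_ends C \<mu>" if "i < h" for i
    using \<beta> that by (auto simp: bijections_def PiE_iff)
  then show ?thesis
    using arrange_in_bijections[OF assms] matchingsD(3)[OF \<mu>]
    by (auto simp: class_pair_sorted_def pair_sorted_def arrange_def lower_ends_def)
qed

lemma induced_matching_apply:
  assumes "f \<in> bijections {..<2 * h} C" "j < 2 * h"
  shows "induced_matching h C f (f j) = f (swap_halves h {..<h} j)"
  using assms by (auto simp: induced_matching_def bijections_def bij_betw_def inv_into_f_f)

lemma induced_matching_in_matchings: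
  assumes f: "f \<in> class_pair_sorted h t C"
  shows "induced_matching h C f \<in> matchings t C"
proof -
  have fb: "f \<in> bijections {..<2 * h} C" and classes: "\<And>i. i < h \<Longrightarrow> t (f i) = t (f (i + h))"
    using f by (auto simp: class_pair_sorted_def pair_sorted_def)
  from fb have inj: "inj_on f {..<2 * h}" and onto: "f ` {..<2 * h} = C"
    by (auto simp: bijections_def bij_betw_def)
  have "induced_matching h C f z \<in> C \<and> induced_matching h C f z \<noteq> z \<and>
      induced_matching h C f (induced_matching h C f z) = z \<and>
      t (induced_matching h C f z) = t z" if "z \<in> C" for z
  proof -
    obtain j where j: "j < 2 * h" and z: "z = f j" using \<open>z \<in> C\<close> onto by auto
    let ?j' = "swap_halves h {..<h} j"
    obtain i where "i < h" "j = i \<and> ?j' = i + h \<or> j = i + h \<and> ?j' = i"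
      using swap_halves_half_cases[OF j] by metis
    then have "?j' < 2 * h" "?j' \<noteq> j" "t (f ?j') = t (f j)"
      by (auto simp: classes)
    moreover have "induced_matching h C f (f ?j') = f j"
      using induced_matching_apply[OF fb \<open>?j' < 2 * h\<close>] by simp
    ultimately show ?thesis
      unfolding z induced_matching_apply[OF fb j]
      using j onto inj_onD[OF inj, of ?j' j] by auto
  qed
  moreover have "induced_matching h C f z = z" if "z \<notin> C" for z
    using that by (simp add: induced_matching_def)
  ultimately show ?thesis by (simp add: matchings_def)
qed

lemma lower_ends_induced_matching:
  assumes f: "f \<in> pair_sorted h C"
  shows "lower_ends C (induced_matching h C f) = f ` {..<h}"
proof -
  have fb: "f \<in> bijections {..<2 * h} C" and sorted: "\<forall>i<h. f i < f (i + h)"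
    using f by (auto simp: pair_sorted_def)
  have onto: "f ` {..<2 * h} = C" using fb by (auto simp: bijections_def bij_betw_def)
  have "f j < induced_matching h C f (f j) \<longleftrightarrow> j < h" if "j < 2 * h" for j
  proof (cases "j < h")
    case True
    then show ?thesis using sorted by (simp add: induced_matching_apply[OF fb] swap_halves_low)
  next
    case False
    then have "induced_matching h C f (f j) = f (j - h)" "f (j - h) < f j"
      using that sorted swap_halves_high[of "j - h" h "{..<h}"] induced_matching_apply[OF fb that]
      by (auto dest: spec[of _ "j - h"])
    then show ?thesis using False by simp
  qed
  then show ?thesis
    using onto by (force simp: lower_ends_def)
qed

lemma restrict_in_bijections_lower_ends:
  assumes f: "f \<in> pair_sorted h C"
  shows "restrict f {..<h} \<in> bijections {..<h} (lower_ends C (induced_matching h C f))"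
proof -
  have "inj_on f {..<h}"
    using f by (auto simp: pair_sorted_def bijections_def bij_betw_def intro: inj_on_subset)
  then show ?thesis
    by (auto simp: bijections_def lower_ends_induced_matching[OF f] bij_betw_def inj_on_def)
qed

lemma induced_matching_arrange:
  assumes \<mu>: "\<mu> \<in> matchings t C" and \<beta>: "\<beta> \<in> bijections {..<h} (lower_ends C \<mu>)"
  shows "induced_matching h C (arrange h \<mu> \<beta>) = \<mu>"
proof
  fix c
  have fb: "arrange h \<mu> \<beta> \<in> bijections {..<2 * h} C" by (rule arrange_in_bijections[OF assms])
  show "induced_matching h C (arrange h \<mu> \<beta>) c = \<mu> c"
  proof (cases "c \<in> C")
    case True
    then obtain j where j: "j < 2 * h" "c = arrange h \<mu> \<beta> j"
      using fb by (auto simp: bijections_def bij_betw_def)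
    then show ?thesis
      using induced_matching_apply[OF fb j(1)] matchings_involution[OF \<mu>]
      by (cases "j < h") (auto simp: arrange_def swap_halves_def)
  qed (simp add: induced_matching_def matchings_outside[OF \<mu>])
qed

lemma restrict_arrange: "\<beta> \<in> extensional {..<h} \<Longrightarrow> restrict (arrange h \<mu> \<beta>) {..<h} = \<beta>"
  by (auto simp: fun_eq_iff arrange_def extensional_def)

lemma arrange_induced_matching:
  assumes f: "f \<in> pair_sorted h C"
  shows "arrange h (induced_matching h C f) (restrict f {..<h}) = f"
proof
  fix j
  have fb: "f \<in> bijections {..<2 * h} C" using f by (simp add: pair_sorted_def)
  show "arrange h (induced_matching h C f) (restrict f {..<h}) j = f j"
  proof (cases "h \<le> j \<and> j < 2 * h")
    case True
    then have "j - h < h" "j - h < 2 * h" "swap_halves h {..<h} (j - h) = j"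
      by (auto simp: swap_halves_def)
    then show ?thesis
      using True induced_matching_apply[OF fb, of "j - h"] by (simp add: arrange_def)
  qed (use fb in \<open>auto simp: arrange_def bijections_def PiE_iff extensional_def\<close>)
qed

lemma bij_betw_arrange:
  "bij_betw (\<lambda>(\<mu>, \<beta>). arrange h \<mu> \<beta>)
     (SIGMA \<mu>:matchings t C. bijections {..<h} (lower_ends C \<mu>)) (class_pair_sorted h t C)"
proof (rule bij_betw_byWitness[where f'="\<lambda>f. (induced_matching h C f, restrict f {..<h})"])
  show "\<forall>x\<in>SIGMA \<mu>:matchings t C. bijections {..<h} (lower_ends C \<mu>).
      (\<lambda>f. (induced_matching h C f, restrict f {..<h})) ((\<lambda>(\<mu>, \<beta>). arrange h \<mu> \<beta>) x) = x"
  proof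
    fix x assume "x \<in> (SIGMA \<mu>:matchings t C. bijections {..<h} (lower_ends C \<mu>))"
    then obtain \<mu> \<beta> where "\<mu> \<in> matchings t C" "\<beta> \<in> bijections {..<h} (lower_ends C \<mu>)"
      and x: "x = (\<mu>, \<beta>)" by blast
    moreover from this have "\<beta> \<in> extensional {..<h}" by (simp add: bijections_def PiE_iff)
    ultimately show "(\<lambda>f. (induced_matching h C f, restrict f {..<h})) ((\<lambda>(\<mu>, \<beta>). arrange h \<mu> \<beta>) x) = x"
      by (simp add: induced_matching_arrange restrict_arrange)
  qed
  show "\<forall>f\<in>class_pair_sorted h t C.
      (\<lambda>(\<mu>, \<beta>). arrange h \<mu> \<beta>) (induced_matching h C f, restrict f {..<h}) = f"
  proof
    fix f assume "f \<in> class_pair_sorted h t C"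
    then have "f \<in> pair_sorted h C" by (simp add: class_pair_sorted_def)
    then show "(\<lambda>(\<mu>, \<beta>). arrange h \<mu> \<beta>) (induced_matching h C f, restrict f {..<h}) = f"
      by (simp add: arrange_induced_matching)
  qed
  show "(\<lambda>(\<mu>, \<beta>). arrange h \<mu> \<beta>) ` (SIGMA \<mu>:matchings t C. bijections {..<h} (lower_ends C \<mu>))
      \<subseteq> class_pair_sorted h t C"
    by (auto intro: arrange_in_class_pair_sorted)
  have "class_pair_sorted h t C \<subseteq> pair_sorted h C" by (auto simp: class_pair_sorted_def)
  then show "(\<lambda>f. (induced_matching h C f, restrict f {..<h})) ` class_pair_sorted h t C
      \<subseteq> (SIGMA \<mu>:matchings t C. bijections {..<h} (lower_ends C \<mu>))"
    by (auto intro: induced_matching_in_matchings restrict_in_bijections_lower_ends)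
qed

lemma sum_class_pair_sorted:
  assumes "finite C"
  shows "(\<Sum>f\<in>class_pair_sorted h t C. \<Prod>i<h. F i (f i) (f (i + h))) =
    (\<Sum>\<mu>\<in>matchings t C. \<Sum>\<beta>\<in>bijections {..<h} (lower_ends C \<mu>). \<Prod>i<h. F i (\<beta> i) (\<mu> (\<beta> i)))"
proof -
  have "(\<Sum>f\<in>class_pair_sorted h t C. \<Prod>i<h. F i (f i) (f (i + h))) =
      (\<Sum>(\<mu>, \<beta>)\<in>(SIGMA \<mu>:matchings t C. bijections {..<h} (lower_ends C \<mu>)).
         \<Prod>i<h. F i (arrange h \<mu> \<beta> i) (arrange h \<mu> \<beta> (i + h)))"
    by (subst sum.reindex_bij_betw[OF bij_betw_arrange, symmetric]) (simp add: split_def)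
  also have "\<dots> = (\<Sum>(\<mu>, \<beta>)\<in>(SIGMA \<mu>:matchings t C. bijections {..<h} (lower_ends C \<mu>)).
         \<Prod>i<h. F i (\<beta> i) (\<mu> (\<beta> i)))"
  proof (rule sum.cong[OF refl], clarify)
    fix \<mu> \<beta>
    show "(\<Prod>i<h. F i (arrange h \<mu> \<beta> i) (arrange h \<mu> \<beta> (i + h))) = (\<Prod>i<h. F i (\<beta> i) (\<mu> (\<beta> i)))"
      by (rule prod.cong) (simp_all add: arrange_def)
  qed
  also have "\<dots> = (\<Sum>\<mu>\<in>matchings t C. \<Sum>\<beta>\<in>bijections {..<h} (lower_ends C \<mu>). \<Prod>i<h. F i (\<beta> i) (\<mu> (\<beta> i)))"
    using assms
    by (simp add: sum.Sigma finite_matchings finite_bijections finite_lower_ends)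
  finally show ?thesis .
qed

section \<open>Permanents of column families of the Sylvester matrix\<close>

text \<open>The permanent of the matrix whose columns are the columns v c (c \<in> C) of H(2^k); indexing
  by C allows repeated columns.\<close>

definition perm_columns :: "nat \<Rightarrow> nat set \<Rightarrow> (nat \<Rightarrow> nat) \<Rightarrow> int" where
  "perm_columns k C v = (\<Sum>f\<in>bijections {..<2^k} C. \<Prod>i<2^k. sylvester k i (v (f i)))"

lemma perm_columns_0:
  assumes "card C = 1"
  shows "perm_columns 0 C v = 1"
proof -
  obtain c where C: "C = {c}" using assms card_1_singletonE by blast
  have bij: "bijections {0} C = {0} \<rightarrow>\<^sub>E {c}"
    unfolding bijections_def C by (auto simp: PiE_iff intro: bij_betw_singletonI)
  have zero: "{..<2^0::nat} = {0}" by auto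
  show ?thesis unfolding perm_columns_def zero bij by (simp add: card_PiE)
qed

lemma prod_if_zero:
  fixes g :: "'b \<Rightarrow> 'a::comm_semiring_1"
  assumes "finite A"
  shows "(\<Prod>i\<in>A. if P i then g i else 0) = (if \<forall>i\<in>A. P i then \<Prod>i\<in>A. g i else 0)"
proof (cases "\<forall>i\<in>A. P i")
  case False
  then show ?thesis by (auto intro!: prod_zero assms)
qed simp

lemma prod_sylvester_Suc_pairs:
  assumes "\<And>i. i < 2^k \<Longrightarrow> x i < 2 * 2^k \<and> y i < 2 * 2^k"
  shows "(\<Prod>i<2^k. sylvester (Suc k) i (x i) * sylvester (Suc k) (i + 2^k) (y i) +
      sylvester (Suc k) i (y i) * sylvester (Suc k) (i + 2^k) (x i)) =
    (if \<forall>i\<in>{..<2^k}. (2^k \<le> x i) = (2^k \<le> y i)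
     then 2^(2^k) * (\<Prod>i<2^k. half_sign k (x i) * sylvester k i (low_xor k (x i) (y i))) else 0)"
proof -
  have "(\<Prod>i<2^k. sylvester (Suc k) i (x i) * sylvester (Suc k) (i + 2^k) (y i) +
      sylvester (Suc k) i (y i) * sylvester (Suc k) (i + 2^k) (x i)) =
    (\<Prod>i<2^k. if (2^k \<le> x i) = (2^k \<le> y i)
      then 2 * (half_sign k (x i) * sylvester k i (low_xor k (x i) (y i))) else 0)"
    using assms by (intro prod.cong refl sylvester_Suc_pair) auto
  also have "\<dots> = (if \<forall>i\<in>{..<2^k}. (2^k \<le> x i) = (2^k \<le> y i)
      then \<Prod>i<2^k. 2 * (half_sign k (x i) * sylvester k i (low_xor k (x i) (y i))) else 0)"
    by (rule prod_if_zero) simp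
  finally show ?thesis by (simp add: prod.distrib)
qed

lemma perm_columns_Suc:
  assumes "\<forall>c\<in>C. v c < 2 * 2^k"
  shows "perm_columns (Suc k) C v = 2^(2^k) *
    (\<Sum>f\<in>class_pair_sorted (2^k) (\<lambda>c. 2^k \<le> v c) C.
       \<Prod>i<2^k. half_sign k (v (f i)) * sylvester k i (low_xor k (v (f i)) (v (f (i + 2^k)))))"
proof -
  let ?h = "2^k :: nat"
  let ?same = "\<lambda>f. \<forall>i\<in>{..<?h}. (?h \<le> v (f i)) = (?h \<le> v (f (i + ?h)))"
  let ?term = "\<lambda>f. \<Prod>i<?h. half_sign k (v (f i)) * sylvester k i (low_xor k (v (f i)) (v (f (i + ?h))))"
  have "perm_columns (Suc k) C v = (\<Sum>f\<in>pair_sorted ?h C. \<Prod>i<?h.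
      sylvester (Suc k) i (v (f i)) * sylvester (Suc k) (i + ?h) (v (f (i + ?h))) +
      sylvester (Suc k) i (v (f (i + ?h))) * sylvester (Suc k) (i + ?h) (v (f i)))"
    unfolding perm_columns_def power_Suc by (rule sum_bijections_pair_sorted)
  also have "\<dots> = (\<Sum>f\<in>pair_sorted ?h C. if ?same f then 2^?h * ?term f else 0)"
    using assms
    by (intro sum.cong refl prod_sylvester_Suc_pairs) (auto simp: pair_sorted_def bijections_def PiE_iff)
  also have "\<dots> = (\<Sum>f\<in>{f\<in>pair_sorted ?h C. ?same f}. 2^?h * ?term f)"
    by (rule sum.inter_filter[symmetric]) (simp add: pair_sorted_def finite_bijections)
  also have "{f\<in>pair_sorted ?h C. ?same f} = class_pair_sorted ?h (\<lambda>c. ?h \<le> v c) C"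
    by (auto simp: class_pair_sorted_def)
  finally show ?thesis by (simp add: sum_distrib_left)
qed

lemma sum_matchings_perm_columns:
  assumes "finite C"
  shows "(\<Sum>f\<in>class_pair_sorted (2^k) t C.
       \<Prod>i<2^k. half_sign k (v (f i)) * sylvester k i (low_xor k (v (f i)) (v (f (i + 2^k))))) =
    (\<Sum>\<mu>\<in>matchings t C. (\<Prod>a\<in>lower_ends C \<mu>. half_sign k (v a)) *
       perm_columns k (lower_ends C \<mu>) (\<lambda>a. low_xor k (v a) (v (\<mu> a))))"
  using sum_class_pair_sorted[OF assms, where h = "2^k" and t = t
      and F = "\<lambda>i a b. half_sign k (v a) * sylvester k i (low_xor k (v a) (v b))"]
proof (simp only:, intro sum.cong refl)
  fix \<mu>
  let ?E = "lower_ends C \<mu>"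
  have "(\<Prod>i<(2::nat)^k. half_sign k (v (\<beta> i))) = (\<Prod>a\<in>?E. half_sign k (v a))"
    if "\<beta> \<in> bijections {..<2^k} ?E" for \<beta>
    using that by (intro prod.reindex_bij_betw) (simp add: bijections_def)
  then show "(\<Sum>\<beta>\<in>bijections {..<2^k} ?E. \<Prod>i<2^k.
        half_sign k (v (\<beta> i)) * sylvester k i (low_xor k (v (\<beta> i)) (v (\<mu> (\<beta> i))))) =
      (\<Prod>a\<in>?E. half_sign k (v a)) * perm_columns k ?E (\<lambda>a. low_xor k (v a) (v (\<mu> a)))"
    by (simp add: perm_columns_def prod.distrib sum_distrib_left)
qed

lemma even_card_half_classes:
  assumes "finite C" "even (card C)" "\<forall>c\<in>C. v c < 2 * 2^k"
    and row: "(\<Prod>c\<in>C. sylvester (Suc k) (2^k) (v c)) = 1" and "c \<in> C"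
  shows "even (card {c'\<in>C. (2^k \<le> v c') = (2^k \<le> v c)})"
proof -
  let ?top = "{c\<in>C. 2^k \<le> v c}"
  have "(\<Prod>c\<in>C. sylvester (Suc k) (2^k) (v c)) = (\<Prod>c\<in>C. half_sign k (v c))"
    using assms(3) by (intro prod.cong refl) (simp add: sylvester_Suc_middle_row)
  then have "even (card ?top)"
    using row prod_half_sign[OF assms(1)] by (simp add: minus_one_power_iff split: if_splits)
  moreover have "card ?top + card {c\<in>C. \<not> 2^k \<le> v c} = card C"
    using assms(1) by (subst card_Un_disjoint[symmetric]) (auto intro: arg_cong[where f = card])
  ultimately have "even (card {c\<in>C. \<not> 2^k \<le> v c})"
    using assms(2) by (metis even_add)
  with \<open>even (card ?top)\<close> show ?thesis
    by (cases "2^k \<le> v c") auto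
qed

lemma prod_rows_lower_ends:
  assumes "finite C" "\<mu> \<in> matchings t C" "\<forall>c\<in>C. v c < 2 * 2^k" "i < 2^k"
  shows "(\<Prod>a\<in>lower_ends C \<mu>. sylvester k i (low_xor k (v a) (v (\<mu> a)))) =
    (\<Prod>c\<in>C. sylvester (Suc k) i (v c))"
proof -
  have "(\<Prod>a\<in>lower_ends C \<mu>. sylvester k i (low_xor k (v a) (v (\<mu> a)))) =
      (\<Prod>a\<in>lower_ends C \<mu>. sylvester k i (v a mod 2^k) * sylvester k i (v (\<mu> a) mod 2^k))"
    unfolding low_xor_def using assms(4) by (intro prod.cong refl sylvester_xor) auto
  also have "\<dots> = (\<Prod>c\<in>C. sylvester k i (v c mod 2^k))"
    by (rule prod_lower_ends[OF assms(1,2)])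
  also have "\<dots> = (\<Prod>c\<in>C. sylvester (Suc k) i (v c))"
    using assms(3,4) by (intro prod.cong refl) (simp add: sylvester_Suc_mod)
  finally show ?thesis .
qed

definition balanced_columns :: "nat \<Rightarrow> nat set \<Rightarrow> (nat \<Rightarrow> nat) \<Rightarrow> bool" where
  "balanced_columns k C v \<longleftrightarrow> finite C \<and> card C = 2^k \<and> (\<forall>c\<in>C. v c < 2^k) \<and>
     (\<forall>i<2^k. (\<Prod>c\<in>C. sylvester k i (v c)) = 1)"

lemma balanced_columns_odd_card_matchings:
  assumes "balanced_columns (Suc k) C v"
  shows "odd (card (matchings (\<lambda>c. 2^k \<le> v c) C))"
proof (rule odd_card_matchings)
  show "finite C" using assms by (simp add: balanced_columns_def)
  show "even (card {c'\<in>C. (2^k \<le> v c') = (2^k \<le> v c)})" if "c \<in> C" for c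
    using assms that by (intro even_card_half_classes) (auto simp: balanced_columns_def)
qed

lemma balanced_columns_merge:
  assumes "balanced_columns (Suc k) C v" "\<mu> \<in> matchings (\<lambda>c. 2^k \<le> v c) C"
  shows "balanced_columns k (lower_ends C \<mu>) (\<lambda>a. low_xor k (v a) (v (\<mu> a)))"
proof -
  have "finite C" "card C = 2 * 2^k" "\<forall>c\<in>C. v c < 2 * 2^k"
    and "\<forall>i<2 * 2^k. (\<Prod>c\<in>C. sylvester (Suc k) i (v c)) = 1"
    using assms(1) by (auto simp: balanced_columns_def)
  then show ?thesis
    using card_lower_ends[OF _ assms(2)] prod_rows_lower_ends[OF _ assms(2)]
    by (auto simp: balanced_columns_def finite_lower_ends low_xor_def xor_less_power)
qed

lemma perm_columns_Suc_matchings: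
  assumes "balanced_columns (Suc k) C v"
  shows "perm_columns (Suc k) C v = 2^(2^k) *
    (\<Sum>\<mu>\<in>matchings (\<lambda>c. 2^k \<le> v c) C. (\<Prod>a\<in>lower_ends C \<mu>. half_sign k (v a)) *
       perm_columns k (lower_ends C \<mu>) (\<lambda>a. low_xor k (v a) (v (\<mu> a))))"
proof -
  have "finite C" "\<forall>c\<in>C. v c < 2 * 2^k" using assms by (auto simp: balanced_columns_def)
  then show ?thesis by (simp add: perm_columns_Suc sum_matchings_perm_columns)
qed

lemma neg_mod_power2:
  fixes x :: int
  assumes "x mod 2^Suc r = 2^r"
  shows "(- x) mod 2^Suc r = 2^r"
  using assms by (simp add: zmod_zminus1_eq_if)

lemma sum_mod_power2_odd_card:
  fixes g :: "'a \<Rightarrow> int"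
  assumes "finite A" "odd (card A)" "\<And>a. a \<in> A \<Longrightarrow> g a mod 2^Suc r = 2^r"
  shows "sum g A mod 2^Suc r = 2^r"
proof -
  obtain m where m: "card A = 2 * m + 1" using assms(2) oddE by blast
  have "sum g A mod 2^Suc r = (\<Sum>a\<in>A. g a mod 2^Suc r) mod 2^Suc r" by (simp add: mod_sum_eq)
  also have "\<dots> = (int (card A) * 2^r) mod 2^Suc r" using assms(3) by simp
  also have "\<dots> = (2^r + int m * 2^Suc r) mod 2^Suc r" unfolding m by (simp add: algebra_simps)
  also have "\<dots> = 2^r" by simp
  finally show ?thesis .
qed

lemma mult_power2_mod:
  fixes x :: int
  assumes "x mod 2^Suc r = 2^r"
  shows "(2^Suc r * x) mod 2^(2 * Suc r) = 2^(Suc r + r)"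
proof -
  have "(2^Suc r * x) mod 2^(2 * Suc r) = 2^Suc r * (x mod 2^Suc r)"
    by (simp only: mult_2 power_add mult_mod_right)
  then show ?thesis using assms by (simp add: power_add)
qed

theorem perm_columns_mod_power2:
  assumes "balanced_columns k C v"
  shows "perm_columns k C v mod 2^(2^k) = 2^(2^k - 1)"
  using assms
proof (induction k arbitrary: C v)
  case 0
  then show ?case by (simp add: balanced_columns_def perm_columns_0)
next
  case (Suc k)
  let ?t = "\<lambda>c. 2^k \<le> v c"
  let ?term = "\<lambda>\<mu>. (\<Prod>a\<in>lower_ends C \<mu>. half_sign k (v a)) *
    perm_columns k (lower_ends C \<mu>) (\<lambda>a. low_xor k (v a) (v (\<mu> a)))"
  obtain r where r: "2^k = Suc r" using gr0_implies_Suc[of "2^k"] by auto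
  have "?term \<mu> mod 2^Suc r = 2^r" if "\<mu> \<in> matchings ?t C" for \<mu>
  proof -
    have "perm_columns k (lower_ends C \<mu>) (\<lambda>a. low_xor k (v a) (v (\<mu> a))) mod 2^Suc r = 2^r"
      using Suc.IH[OF balanced_columns_merge[OF Suc.prems that]] by (simp add: r)
    moreover have "finite (lower_ends C \<mu>)"
      using Suc.prems by (simp add: balanced_columns_def finite_lower_ends)
    ultimately show ?thesis
      using prod_half_sign[of "lower_ends C \<mu>" k v] neg_mod_power2
      by (auto simp: minus_one_power_iff)
  qed
  then have "(\<Sum>\<mu>\<in>matchings ?t C. ?term \<mu>) mod 2^Suc r = 2^r"
    using balanced_columns_odd_card_matchings[OF Suc.prems] Suc.prems
    by (intro sum_mod_power2_odd_card finite_matchings) (auto simp: balanced_columns_def)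
  then have "(2^Suc r * (\<Sum>\<mu>\<in>matchings ?t C. ?term \<mu>)) mod 2^(2 * Suc r) = 2^(Suc r + r)"
    by (rule mult_power2_mod)
  moreover have "2^Suc k = 2 * Suc r" "2 * Suc r - 1 = Suc r + r" using r by simp_all
  ultimately show ?case
    unfolding perm_columns_Suc_matchings[OF Suc.prems] by (simp only: r)
qed

corollary perm_sylvester_mod_power2:
  assumes "2 \<le> p"
  shows "perm (2^p) (sylvester p) mod 2^(2^p) = 2^(2^p - 1)"
proof -
  have "perm (2^p) (sylvester p) = perm_columns p {..<2^p} id"
    by (simp add: perm_eq_sum_bijections perm_columns_def)
  also have "\<dots> mod 2^(2^p) = 2^(2^p - 1)"
    using prod_sylvester_row[OF assms] by (intro perm_columns_mod_power2) (simp add: balanced_columns_def)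
  finally show ?thesis .
qed

lemma mult_upt:
  assumes "k < n"
  shows "mult [0..<n] k = 1"
proof -
  have "{i. i < length [0..<n] \<and> [0..<n] ! i = k} = {k}" using assms by auto
  then show ?thesis unfolding mult_def length_filter_conv_card by simp
qed

lemma amplitude_upt: "amplitude U [0..<n] [0..<n] = perm n U"
proof -
  have "(\<Prod>k\<in>set [0..<n]. fact (mult [0..<n] k)) = (1::nat)"
    by (rule prod.neutral) (simp add: mult_upt)
  moreover have "perm n (scattering U [0..<n] [0..<n]) = perm n U"
    by (rule perm_cong) (simp add: scattering_def)
  ultimately show ?thesis by (simp add: amplitude_def)
qed

theorem mainTheorem10:
  fixes p :: nat
  assumes "p \<ge> 2"
  shows "perm (2 ^ p) (sylvester p) \<noteq> 0 \<and>
         \<not> suppressed (\<lambda>i j. of_int (sylvester p i j) / complex_of_real (sqrt (real (2 ^ p))))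
                       [0..<2 ^ p] [0..<2 ^ p]"
proof
  show nonzero: "perm (2 ^ p) (sylvester p) \<noteq> 0"
    using perm_sylvester_mod_power2[OF assms] by (metis mod_0 power_not_zero zero_neq_numeral)
  have "amplitude (\<lambda>i j. of_int (sylvester p i j) / complex_of_real (sqrt (real (2 ^ p))))
      [0..<2 ^ p] [0..<2 ^ p] = of_int (perm (2 ^ p) (sylvester p)) / complex_of_real (sqrt (2 ^ p)) ^ 2 ^ p"
    by (simp add: amplitude_upt perm_divide of_int_perm)
  then show "\<not> suppressed (\<lambda>i j. of_int (sylvester p i j) / complex_of_real (sqrt (real (2 ^ p))))
      [0..<2 ^ p] [0..<2 ^ p]"
    using nonzero by (simp add: suppressed_def)
qed

end
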